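(* Let $n\ge r\ge1$, let $\mathcal{O}\subset\mathbb{R}^{n\times r}$ be open with ${\rm St}(n,r)\subset\mathcal{O}$ and $f:\mathcal{O}\to\mathbb{R}$ continuously differentiable. A matrix $X\in\mathcal{S}_{+}^{n,r}$ satisfies \[ 0\in\nabla f(X)+{\rm N}_X M+\mathcal{N}_{\mathbb{R}_{+}^{n\times r}}(X) \] if and only if $-\nabla f(X)\in[\mathcal{T}_{\mathcal{S}_{+}^{n,r}}(X)]^{\circ}$.
   Context: $M={\rm St}(n,r):=\{X\in\mathbb{R}^{n\times r}: X^\top X=I_r\}$, with normal space ${\rm N}_XM=\{XS: S\in\mathbb{R}^{r\times r}\text{ symmetric}\}$. $\mathbb{R}_{+}^{n\times r}$ is the entrywise nonnegative cone, $\mathcal{S}_{+}^{n,r}:=\mathbb{R}_{+}^{n\times r}\cap{\rm St}(n,r)$, $\mathcal{N}_{\mathbb{R}_{+}^{n\times r}}(X)$ is the normal cone of convex analysis, $\mathcal{T}_{\Omega}(X)$ is the (Bouligand) tangent cone of $\Omega$ at $X$, and $K^\circ:=\{V:\langle V,H\rangle\le0\ \forall H\in K\}$ is the negative polar of a cone $K$ with respect to the trace inner product. (The first condition is the paper's definition of a stationary point of $\min_{X\in\mathcal{S}_{+}^{n,r}}f(X)$.) *)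

theory Defs
  imports "HOL-Analysis.Analysis"
begin

text \<open>Matrices in R^(n x r) are rendered as real^'r^'n (rows indexed by 'n, columns by 'r).
  The inner product on this type is the trace inner product sum_ij X_ij Y_ij.\<close>

definition stiefel :: "(real^'r^'n) set" where
  "stiefel = {X. transpose X ** X = mat 1}"

definition nonneg_cone :: "(real^'r^'n) set" where
  "nonneg_cone = {X. \<forall>i j. 0 \<le> X $ i $ j}"

definition nonneg_stiefel :: "(real^'r^'n) set" where
  "nonneg_stiefel = nonneg_cone \<inter> stiefel"

definition stiefel_normal_space :: "real^'r^'n \<Rightarrow> (real^'r^'n) set" where
  "stiefel_normal_space X = {X ** S | S. transpose S = S}"

definition normal_cone :: "'a::real_inner set \<Rightarrow> 'a \<Rightarrow> 'a set" where
  "normal_cone C x = {v. \<forall>y\<in>C. inner v (y - x) \<le> 0}"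

definition tangent_cone :: "'a::real_normed_vector set \<Rightarrow> 'a \<Rightarrow> 'a set" where
  "tangent_cone S x = {h. \<exists>(y::nat \<Rightarrow> 'a) (t::nat \<Rightarrow> real).
      (\<forall>k. y k \<in> S \<and> t k > 0) \<and> y \<longlonglongrightarrow> x \<and> t \<longlonglongrightarrow> 0 \<and>
      (\<lambda>k. (1 / t k) *\<^sub>R (y k - x)) \<longlonglongrightarrow> h}"

definition polar_cone :: "'a::real_inner set \<Rightarrow> 'a set" where
  "polar_cone K = {v. \<forall>h\<in>K. inner v h \<le> 0}"

end

theory Submission
  imports Defs
begin

text \<open>
  If \<open>X\<close> and \<open>X + t D\<close> both lie on the Stiefel manifold then
  \<open>X\<^sup>T D + D\<^sup>T X = - t D\<^sup>T D\<close>; letting \<open>t \<rightarrow> 0\<close> along a tangent sequence shows that every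
  tangent direction is orthogonal to \<open>{X S | S symmetric}\<close>, while the normal cone of the orthant
  is polar to the tangent cone of any of its subsets. Conversely, rotating column \<open>j\<close> of \<open>X\<close> towards
  a vector \<open>u\<close> orthogonal to all columns (and nonnegative where column \<open>j\<close> vanishes) stays in
  \<open>S\<^sub>+\<close> and yields the tangent direction \<open>u e\<^sub>j\<^sup>T\<close>. Testing the polar condition on these
  directions shows that \<open>V\<close> is nonpositive on the zero rows of \<open>X\<close> and equals \<open>d\<^sub>j X\<close> on the support
  of each column \<open>j\<close>. As every row of a matrix in \<open>S\<^sub>+\<close> has at most one positive entry,
  \<open>V = X S + B\<close> with \<open>S\<close> the diagonal \<open>d\<close> plus a large constant off the diagonal and \<open>B \<le> 0\<close>
  vanishing on the support of \<open>X\<close>.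
\<close>

lemma stiefel_iff_orthonormal_columns:
  "X \<in> stiefel \<longleftrightarrow> (\<forall>k l. inner (column k X) (column l X) = (if k = l then 1 else 0))"
  by (simp add: stiefel_def matrix_mult_transpose_dot_column mat_def vec_eq_iff)

lemma inner_transpose:
  fixes A B :: "real^'m^'n"
  shows "inner (transpose A) (transpose B) = inner A B"
  unfolding inner_vec_def transpose_def by (simp add: sum.swap[of _ "UNIV::'n set"])

lemma inner_matrix_mult_left:
  fixes X :: "real^'k^'n" and S :: "real^'m^'k"
  shows "inner (X ** S) D = inner S (transpose X ** D)"
  unfolding inner_vec_def matrix_matrix_mult_def transpose_def
  by (simp add: sum_distrib_left sum_distrib_right mult_ac sum.swap[of _ "UNIV::'n set"])
    (rule sum.cong[OF refl], rule sum.swap)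

lemma stiefel_perturbation:
  fixes X D :: "real^'r^'n"
  assumes "X \<in> stiefel" "X + t *\<^sub>R D \<in> stiefel" "t \<noteq> 0"
  shows "transpose X ** D + transpose D ** X = - t *\<^sub>R (transpose D ** D)"
proof -
  have "transpose (X + t *\<^sub>R D) ** (X + t *\<^sub>R D)
      = transpose X ** X + t *\<^sub>R (transpose X ** D + transpose D ** X + t *\<^sub>R (transpose D ** D))"
    by (simp add: vec_eq_iff matrix_matrix_mult_def transpose_def algebra_simps sum.distrib sum_distrib_left)
  with assms have "t *\<^sub>R (transpose X ** D + transpose D ** X + t *\<^sub>R (transpose D ** D)) = 0"
    by (simp add: stiefel_def)
  with \<open>t \<noteq> 0\<close> show ?thesis by (simp add: eq_neg_iff_add_eq_0)
qed

lemma inner_symmetric_matrix_transpose: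
  fixes S M :: "real^'m^'m"
  assumes "transpose S = S"
  shows "inner S (transpose M) = inner S M"
  by (metis assms inner_transpose transpose_transpose)

lemma stiefel_normal_space_orthogonal_tangent_cone:
  fixes X :: "real^'r^'n"
  assumes "M \<subseteq> stiefel" "X \<in> stiefel" "A \<in> stiefel_normal_space X" "h \<in> tangent_cone M X"
  shows "inner A h = 0"
proof -
  obtain S where S: "transpose S = S" "A = X ** S"
    using assms(3) by (auto simp: stiefel_normal_space_def)
  obtain y t where y: "\<And>k. y k \<in> M" and t: "\<And>k. t k > 0" "t \<longlonglongrightarrow> 0"
    and D: "(\<lambda>k. (1 / t k) *\<^sub>R (y k - X)) \<longlonglongrightarrow> h"
    using assms(4) unfolding tangent_cone_def by blast
  define D where "D k = (1 / t k) *\<^sub>R (y k - X)" for k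
  have "inner A (D k) = - (t k / 2) * inner S (transpose (D k) ** D k)" for k
  proof -
    have "X + t k *\<^sub>R D k \<in> stiefel"
      using y[of k] t(1)[of k] assms(1) by (auto simp: D_def)
    then have "transpose X ** D k + transpose (D k) ** X = - t k *\<^sub>R (transpose (D k) ** D k)"
      using stiefel_perturbation assms(2) t(1)[of k] by (metis less_irrefl)
    moreover have "2 * inner A (D k) = inner S (transpose X ** D k + transpose (D k) ** X)"
      using inner_symmetric_matrix_transpose[OF S(1), of "transpose X ** D k"]
      by (simp add: S(2) inner_matrix_mult_left inner_add_right matrix_transpose_mul)
    ultimately show ?thesis by simp
  qed
  moreover have "D \<longlonglongrightarrow> h" using D by (simp add: D_def[abs_def])
  then have "(\<lambda>k. - (t k / 2) * inner S (transpose (D k) ** D k)) \<longlonglongrightarrow> - (0 / 2) * inner S (transpose h ** h)"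
    unfolding inner_vec_def matrix_matrix_mult_def transpose_def
    by (intro tendsto_intros t(2)) simp
  ultimately have "(\<lambda>k. inner A (D k)) \<longlonglongrightarrow> 0" by simp
  moreover have "(\<lambda>k. inner A (D k)) \<longlonglongrightarrow> inner A h" using \<open>D \<longlonglongrightarrow> h\<close> by (intro tendsto_intros)
  ultimately show ?thesis using LIMSEQ_unique by blast
qed

lemma normal_cone_subset_polar_tangent_cone:
  fixes x :: "'a::real_inner"
  assumes "M \<subseteq> C"
  shows "normal_cone C x \<subseteq> polar_cone (tangent_cone M x)"
proof (intro subsetI, unfold polar_cone_def, intro CollectI ballI)
  fix v h assume v: "v \<in> normal_cone C x" and "h \<in> tangent_cone M x"
  then obtain y t where y: "\<And>k. y k \<in> M" and t: "\<And>k. t k > 0"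
    and D: "(\<lambda>k. (1 / t k) *\<^sub>R (y k - x)) \<longlonglongrightarrow> h"
    unfolding tangent_cone_def by blast
  have "inner v ((1 / t k) *\<^sub>R (y k - x)) \<le> 0" for k
    using v y[of k] t[of k] assms by (auto simp: normal_cone_def divide_nonpos_pos)
  moreover have "(\<lambda>k. inner v ((1 / t k) *\<^sub>R (y k - x))) \<longlonglongrightarrow> inner v h"
    using D by (intro tendsto_intros)
  ultimately show "inner v h \<le> 0" by (intro LIMSEQ_le_const2) auto
qed

lemma stiefel_normal_space_plus_normal_cone_subset_polar:
  fixes X :: "real^'r^'n"
  assumes "X \<in> nonneg_stiefel" "A \<in> stiefel_normal_space X" "B \<in> normal_cone nonneg_cone X"
  shows "A + B \<in> polar_cone (tangent_cone nonneg_stiefel X)"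
proof -
  have "B \<in> polar_cone (tangent_cone nonneg_stiefel X)"
    using assms(3) normal_cone_subset_polar_tangent_cone[of nonneg_stiefel nonneg_cone]
    by (auto simp: nonneg_stiefel_def)
  moreover have "inner A h = 0" if "h \<in> tangent_cone nonneg_stiefel X" for h
    using stiefel_normal_space_orthogonal_tangent_cone[OF _ _ assms(2) that] assms(1)
    by (auto simp: nonneg_stiefel_def)
  ultimately show ?thesis by (simp add: polar_cone_def inner_add_left)
qed

lemma tangent_cone_if_difference_quotient_at_right:
  fixes \<gamma> :: "real \<Rightarrow> 'a::real_normed_vector"
  assumes M: "eventually (\<lambda>t. \<gamma> t \<in> M) (at_right 0)"
    and v: "((\<lambda>t. (1 / t) *\<^sub>R (\<gamma> t - x)) \<longlongrightarrow> v) (at_right 0)"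
  shows "v \<in> tangent_cone M x"
proof -
  have "((\<lambda>t. x + t *\<^sub>R ((1 / t) *\<^sub>R (\<gamma> t - x))) \<longlongrightarrow> x + 0 *\<^sub>R v) (at_right 0)"
    by (intro tendsto_intros v)
  moreover have "eventually (\<lambda>t. x + t *\<^sub>R ((1 / t) *\<^sub>R (\<gamma> t - x)) = \<gamma> t) (at_right (0::real))"
    by (simp add: eventually_at_filter)
  ultimately have x: "(\<gamma> \<longlongrightarrow> x) (at_right 0)"
    by (simp add: tendsto_cong)
  have "filterlim (\<lambda>k. inverse (real (Suc k))) (at_right 0) sequentially"
    by (intro tendsto_imp_filterlim_at_right LIMSEQ_inverse_real_of_nat) simp
  from eventually_compose_filterlim[OF M this]
  obtain N where N: "\<And>k. k \<ge> N \<Longrightarrow> \<gamma> (inverse (real (Suc k))) \<in> M"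
    by (auto simp: eventually_sequentially)
  define t where "t k = inverse (real (Suc (k + N)))" for k
  have t0: "t \<longlonglongrightarrow> 0"
    unfolding t_def by (rule LIMSEQ_ignore_initial_segment[OF LIMSEQ_inverse_real_of_nat])
  then have t: "filterlim t (at_right 0) sequentially"
    by (intro tendsto_imp_filterlim_at_right always_eventually) (auto simp: t_def)
  have "\<gamma> (t k) \<in> M \<and> t k > 0" for k
    using N[of "k + N"] by (simp add: t_def)
  then have "(\<forall>k. \<gamma> (t k) \<in> M \<and> t k > 0) \<and> (\<lambda>k. \<gamma> (t k)) \<longlonglongrightarrow> x \<and> t \<longlonglongrightarrow> 0 \<and>
      (\<lambda>k. (1 / t k) *\<^sub>R (\<gamma> (t k) - x)) \<longlonglongrightarrow> v"
    using filterlim_compose[OF x t] filterlim_compose[OF v t] t0 by blast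
  then show ?thesis unfolding tangent_cone_def by (intro CollectI exI[of _ "\<lambda>k. \<gamma> (t k)"] exI[of _ t])
qed

definition column_matrix :: "'c \<Rightarrow> 'a::zero^'r \<Rightarrow> 'a^'c^'r" where
  "column_matrix j v = (\<chi> i l. if l = j then v $ i else 0)"

lemma column_matrix_nth [simp]: "column_matrix j v $ i $ l = (if l = j then v $ i else 0)"
  by (simp add: column_matrix_def)

lemma linear_column_matrix: "linear (column_matrix j :: real^'n \<Rightarrow> real^'r^'n)"
  by (auto simp: linear_iff vec_eq_iff)

lemma inner_column_matrix: "inner A (column_matrix j v) = inner (column j A) v"
  by (simp add: inner_vec_def column_def if_distrib sum.swap[of _ UNIV] cong: if_cong)

lemma stiefel_replace_column:
  fixes X :: "real^'r^'n"
  assumes "X \<in> stiefel" "inner v v = 1" "\<And>k. k \<noteq> j \<Longrightarrow> inner v (column k X) = 0"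
  shows "X + column_matrix j (v - column j X) \<in> stiefel"
proof -
  have "column l (X + column_matrix j (v - column j X)) = (if l = j then v else column l X)" for l
    by (simp add: column_def vec_eq_iff)
  with assms show ?thesis
    by (auto simp: stiefel_iff_orthonormal_columns inner_commute)
qed

\<comment> \<open>Tangent half-angle substitution: \<open>(rat_cos a t, sqrt a * rat_sin a t)\<close> runs through the unit
  circle with velocity \<open>(0, sqrt a)\<close> at \<open>t = 0\<close>.\<close>
definition rat_cos :: "real \<Rightarrow> real \<Rightarrow> real" where
  "rat_cos a t = (4 - t\<^sup>2 * a) / (4 + t\<^sup>2 * a)"

definition rat_sin :: "real \<Rightarrow> real \<Rightarrow> real" where
  "rat_sin a t = 4 * t / (4 + t\<^sup>2 * a)"

lemma rat_cos_sin_circle: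
  assumes "0 \<le> a"
  shows "(rat_cos a t)\<^sup>2 + (rat_sin a t)\<^sup>2 * a = 1"
proof -
  have p: "4 + t\<^sup>2 * a > 0"
    using assms by (simp add: add_pos_nonneg)
  have "(rat_cos a t)\<^sup>2 + (rat_sin a t)\<^sup>2 * a = ((4 - t\<^sup>2 * a)\<^sup>2 + (4 * t)\<^sup>2 * a) / (4 + t\<^sup>2 * a)\<^sup>2"
    by (simp add: rat_cos_def rat_sin_def power_divide add_divide_distrib)
  also have "(4 - t\<^sup>2 * a)\<^sup>2 + (4 * t)\<^sup>2 * a = (4 + t\<^sup>2 * a)\<^sup>2"
    by (simp add: power2_eq_square algebra_simps)
  finally show ?thesis
    using p by simp
qed

lemma rat_sin_nonneg: "0 \<le> a \<Longrightarrow> 0 \<le> t \<Longrightarrow> 0 \<le> rat_sin a t"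
  by (simp add: rat_sin_def add_nonneg_nonneg)

lemma tendsto_rat_cos: "0 \<le> a \<Longrightarrow> (rat_cos a \<longlongrightarrow> 1) (at 0)"
  unfolding rat_cos_def by (rule tendsto_eq_intros refl | simp)+

lemma tendsto_rat_sin: "0 \<le> a \<Longrightarrow> (rat_sin a \<longlongrightarrow> 0) (at 0)"
  unfolding rat_sin_def by (rule tendsto_eq_intros refl | simp)+

lemma rat_cos_sin_difference_quotients:
  assumes "0 \<le> a"
  shows "((\<lambda>t. (rat_cos a t - 1) / t) \<longlongrightarrow> 0) (at 0)" "((\<lambda>t. rat_sin a t / t) \<longlongrightarrow> 1) (at 0)"
proof -
  have p: "4 + t\<^sup>2 * a > 0" for t
    using assms by (simp add: add_pos_nonneg)
  have "(rat_cos a t - 1) / t = - 2 * t * a / (4 + t\<^sup>2 * a)" "rat_sin a t / t = 4 / (4 + t\<^sup>2 * a)"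
    if "t \<noteq> 0" for t
    using that p[of t] by (simp_all add: rat_cos_def rat_sin_def divide_simps) (simp add: power2_eq_square algebra_simps)
  moreover have "((\<lambda>t. - 2 * t * a / (4 + t\<^sup>2 * a)) \<longlongrightarrow> 0) (at 0)" "((\<lambda>t. 4 / (4 + t\<^sup>2 * a)) \<longlongrightarrow> 1) (at 0)"
    by (rule tendsto_eq_intros refl | simp)+
  ultimately show "((\<lambda>t. (rat_cos a t - 1) / t) \<longlongrightarrow> 0) (at 0)" "((\<lambda>t. rat_sin a t / t) \<longlongrightarrow> 1) (at 0)"
    by (auto elim!: Lim_transform_eventually simp: eventually_at_filter)
qed

definition column_rotation :: "'c \<Rightarrow> real^'r \<Rightarrow> real^'c^'r \<Rightarrow> real \<Rightarrow> real^'c^'r" where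
  "column_rotation j u X t =
    X + column_matrix j ((rat_cos (inner u u) t - 1) *\<^sub>R column j X + rat_sin (inner u u) t *\<^sub>R u)"

lemma column_rotation_nth:
  "column_rotation j u X t $ i $ l =
    (if l = j then rat_cos (inner u u) t * X $ i $ j + rat_sin (inner u u) t * u $ i else X $ i $ l)"
  by (simp add: column_rotation_def column_def algebra_simps)

lemma column_rotation_stiefel:
  fixes X :: "real^'r^'n"
  assumes "X \<in> stiefel" "\<And>k. inner u (column k X) = 0"
  shows "column_rotation j u X t \<in> stiefel"
proof -
  define v where "v = rat_cos (inner u u) t *\<^sub>R column j X + rat_sin (inner u u) t *\<^sub>R u"
  have x: "inner (column j X) (column j X) = 1" "\<And>k. k \<noteq> j \<Longrightarrow> inner (column j X) (column k X) = 0"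
    using assms(1) by (auto simp: stiefel_iff_orthonormal_columns)
  have "inner v v = (rat_cos (inner u u) t)\<^sup>2 + (rat_sin (inner u u) t)\<^sup>2 * inner u u"
    using x(1) assms(2)[of j] by (simp add: v_def inner_add inner_commute power2_eq_square algebra_simps)
  also have "\<dots> = 1"
    by (simp add: rat_cos_sin_circle)
  finally have "X + column_matrix j (v - column j X) \<in> stiefel"
    using x(2) assms(2) by (intro stiefel_replace_column[OF assms(1)]) (simp_all add: v_def inner_add_left)
  then show ?thesis
    by (simp add: column_rotation_def v_def algebra_simps)
qed

lemma eventually_column_rotation_nonneg:
  fixes X :: "real^'r^'n"
  assumes X: "X \<in> nonneg_cone" and sign: "\<And>i. X $ i $ j = 0 \<Longrightarrow> 0 \<le> u $ i"
  shows "eventually (\<lambda>t. column_rotation j u X t \<in> nonneg_cone) (at_right 0)"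
proof -
  have nn: "\<And>i l. 0 \<le> X $ i $ l"
    using X by (simp add: nonneg_cone_def)
  have "eventually (\<lambda>t. 0 \<le> rat_cos (inner u u) t * X $ i $ j + rat_sin (inner u u) t * u $ i) (at_right 0)" for i
  proof (cases "X $ i $ j = 0")
    case True
    have "eventually (\<lambda>t. 0 < t) (at_right (0::real))"
      by (simp add: eventually_at_filter)
    then show ?thesis
      by eventually_elim (use True sign[OF True] in \<open>simp add: rat_sin_nonneg\<close>)
  next
    case False
    have "((\<lambda>t. rat_cos (inner u u) t * X $ i $ j + rat_sin (inner u u) t * u $ i)
        \<longlongrightarrow> 1 * X $ i $ j + 0 * u $ i) (at_right 0)"
      by (intro tendsto_intros tendsto_mono[OF at_le[OF subset_UNIV] tendsto_rat_cos]
          tendsto_mono[OF at_le[OF subset_UNIV] tendsto_rat_sin]) simp_all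
    moreover have "0 < 1 * X $ i $ j + 0 * u $ i"
      using False nn[of i j] by simp
    ultimately show ?thesis
      by (rule order_tendstoD(1)[THEN eventually_mono]) simp
  qed
  then have "eventually (\<lambda>t. \<forall>i. 0 \<le> rat_cos (inner u u) t * X $ i $ j + rat_sin (inner u u) t * u $ i)
      (at_right 0)"
    by (rule eventually_all_finite)
  then show ?thesis
    by eventually_elim (use nn in \<open>simp add: nonneg_cone_def column_rotation_nth\<close>)
qed

lemma column_rotation_difference_quotient:
  fixes X :: "real^'r^'n"
  shows "((\<lambda>t. (1 / t) *\<^sub>R (column_rotation j u X t - X)) \<longlongrightarrow> column_matrix j u) (at 0)"
proof -
  define a where "a = inner u u"
  have "(1 / t) *\<^sub>R (column_rotation j u X t - X) =
      column_matrix j (((rat_cos a t - 1) / t) *\<^sub>R column j X + (rat_sin a t / t) *\<^sub>R u)" for t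
  proof -
    have "(1 / t) *\<^sub>R (column_rotation j u X t - X) =
        column_matrix j ((1 / t) *\<^sub>R ((rat_cos a t - 1) *\<^sub>R column j X + rat_sin a t *\<^sub>R u))"
      by (simp only: column_rotation_def a_def add_diff_cancel_left' linear_cmul[OF linear_column_matrix])
    then show ?thesis
      by (simp add: scaleR_add_right)
  qed
  moreover have "((\<lambda>t. column_matrix j (((rat_cos a t - 1) / t) *\<^sub>R column j X + (rat_sin a t / t) *\<^sub>R u))
      \<longlongrightarrow> column_matrix j (0 *\<^sub>R column j X + 1 *\<^sub>R u)) (at 0)"
    using rat_cos_sin_difference_quotients[of a]
    by (intro bounded_linear.tendsto[OF linear_column_matrix[unfolded linear_conv_bounded_linear]]
        tendsto_intros) (simp_all add: a_def)
  ultimately show ?thesis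
    by simp
qed

lemma column_matrix_in_tangent_cone_nonneg_stiefel:
  fixes X :: "real^'r^'n"
  assumes X: "X \<in> nonneg_stiefel"
    and orth: "\<And>k. inner u (column k X) = 0"
    and sign: "\<And>i. X $ i $ j = 0 \<Longrightarrow> 0 \<le> u $ i"
  shows "column_matrix j u \<in> tangent_cone nonneg_stiefel X"
proof (rule tangent_cone_if_difference_quotient_at_right)
  show "eventually (\<lambda>t. column_rotation j u X t \<in> nonneg_stiefel) (at_right 0)"
    using eventually_column_rotation_nonneg[of X j u] sign column_rotation_stiefel[OF _ orth] X
    by (simp add: nonneg_stiefel_def)
  show "((\<lambda>t. (1 / t) *\<^sub>R (column_rotation j u X t - X)) \<longlongrightarrow> column_matrix j u) (at_right 0)"
    by (rule tendsto_mono[OF at_le[OF subset_UNIV] column_rotation_difference_quotient])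
qed

lemma nonneg_stiefel_row_support_unique:
  fixes X :: "real^'r^'n"
  assumes "X \<in> nonneg_stiefel" "X $ i $ j > 0" "X $ i $ k > 0"
  shows "j = k"
proof (rule ccontr)
  assume "j \<noteq> k"
  with assms(1) have "(\<Sum>i'\<in>UNIV. X $ i' $ j * X $ i' $ k) = 0"
    by (simp add: nonneg_stiefel_def stiefel_iff_orthonormal_columns inner_vec_def column_def)
  moreover have "\<forall>i'\<in>UNIV. 0 \<le> X $ i' $ j * X $ i' $ k"
    using assms(1) by (simp add: nonneg_stiefel_def nonneg_cone_def)
  ultimately have "X $ i $ j * X $ i $ k = 0"
    by (simp add: sum_nonneg_eq_0_iff)
  with assms(2,3) show False by simp
qed

lemma inner_column_le_0_if_polar_tangent_cone:
  fixes X V :: "real^'r^'n"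
  assumes "V \<in> polar_cone (tangent_cone nonneg_stiefel X)" "X \<in> nonneg_stiefel"
    and "\<And>k. inner u (column k X) = 0" "\<And>i. X $ i $ j = 0 \<Longrightarrow> 0 \<le> u $ i"
  shows "inner (column j V) u \<le> 0"
proof -
  have "column_matrix j u \<in> tangent_cone nonneg_stiefel X"
    by (rule column_matrix_in_tangent_cone_nonneg_stiefel) (use assms in auto)
  with assms(1) show ?thesis
    by (auto simp: polar_cone_def inner_column_matrix)
qed

lemma polar_tangent_cone_nonneg_stiefel_zero_row:
  fixes X V :: "real^'r^'n"
  assumes "V \<in> polar_cone (tangent_cone nonneg_stiefel X)" "X \<in> nonneg_stiefel"
    and "\<And>k. X $ i $ k = 0"
  shows "V $ i $ j \<le> 0"
proof -
  have "inner (column j V) (axis i 1) \<le> 0"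
    by (rule inner_column_le_0_if_polar_tangent_cone[OF assms(1,2)])
      (simp add: inner_axis' column_def assms(3), simp add: axis_def)
  then show ?thesis
    by (simp add: inner_axis column_def)
qed

lemma polar_tangent_cone_nonneg_stiefel_support:
  fixes X V :: "real^'r^'n"
  assumes V: "V \<in> polar_cone (tangent_cone nonneg_stiefel X)" and X: "X \<in> nonneg_stiefel"
    and pos: "X $ i $ j > 0"
  shows "V $ i $ j = inner (column j V) (column j X) * X $ i $ j"
proof -
  define d where "d = inner (column j V) (column j X)"
  define w where "w = (\<chi> i'. if X $ i' $ j \<noteq> 0 then V $ i' $ j - d * X $ i' $ j else 0)"
  have nn: "\<And>i l. 0 \<le> X $ i $ l" and unit: "inner (column j X) (column j X) = 1"
    using X by (auto simp: nonneg_stiefel_def nonneg_cone_def stiefel_iff_orthonormal_columns)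
  have "inner w (column k X) = 0" for k
  proof (cases "k = j")
    case True
    have "inner w (column j X) = inner (column j V - d *\<^sub>R column j X) (column j X)"
      unfolding inner_vec_def by (intro sum.cong) (auto simp: w_def column_def)
    then show ?thesis
      using True unit by (simp add: d_def inner_diff_left)
  next
    case False
    have "w $ i' * X $ i' $ k = 0" for i'
      using nonneg_stiefel_row_support_unique[OF X, of i' j k] nn[of i' j] nn[of i' k] False
      by (auto simp: w_def)
    then show ?thesis
      unfolding inner_vec_def column_def by (intro sum.neutral ballI) simp
  qed
  moreover have "0 \<le> w $ i'" "0 \<le> (- w) $ i'" if "X $ i' $ j = 0" for i'
    using that by (auto simp: w_def)
  \<comment> \<open>\<open>w\<close> vanishes off the support of column \<open>j\<close>, so both \<open>w\<close> and \<open>- w\<close> are admissible\<close>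
  ultimately have "inner (column j V) w \<le> 0" "inner (column j V) (- w) \<le> 0"
    by (intro inner_column_le_0_if_polar_tangent_cone[OF V X]; simp)+
  then have "inner (column j V) w = 0" by simp
  moreover have "inner w w = inner (column j V - d *\<^sub>R column j X) w"
    unfolding inner_vec_def by (intro sum.cong) (auto simp: w_def column_def)
  ultimately have "w = 0"
    using \<open>inner w (column j X) = 0\<close> by (simp add: inner_diff_left inner_diff_right inner_commute)
  then have "w $ i = 0" by simp
  then show ?thesis
    using pos by (simp add: d_def w_def)
qed

lemma normal_cone_nonneg_coneI:
  fixes B X :: "real^'r^'n"
  assumes "\<And>i l. B $ i $ l \<le> 0" "\<And>i l. B $ i $ l * X $ i $ l = 0"
  shows "B \<in> normal_cone nonneg_cone X"
proof -
  have "inner B (Y - X) \<le> 0" if "Y \<in> nonneg_cone" for Y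
  proof -
    have "B $ i $ l * (Y $ i $ l - X $ i $ l) \<le> 0" for i l
      using assms[of i l] that mult_nonpos_nonneg[of "B $ i $ l" "Y $ i $ l"]
      by (auto simp: nonneg_cone_def right_diff_distrib)
    then show ?thesis
      by (simp add: inner_vec_def sum_nonpos)
  qed
  then show ?thesis by (simp add: normal_cone_def)
qed

lemma stiefel_normal_space_plus_normal_cone_if:
  fixes X V :: "real^'r^'n"
  assumes X: "X \<in> nonneg_stiefel"
    and zero_row: "\<And>i j. (\<And>k. X $ i $ k = 0) \<Longrightarrow> V $ i $ j \<le> 0"
    and support: "\<And>i j. X $ i $ j > 0 \<Longrightarrow> V $ i $ j = d j * X $ i $ j"
  shows "\<exists>A\<in>stiefel_normal_space X. \<exists>B\<in>normal_cone nonneg_cone X. V = A + B"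
proof -
  have nn: "\<And>i l. 0 \<le> X $ i $ l"
    using X by (simp add: nonneg_stiefel_def nonneg_cone_def)
  define c where "c = Max (range (\<lambda>(i, l, k). \<bar>V $ i $ l\<bar> / X $ i $ k))"
  have c: "\<bar>V $ i $ l\<bar> \<le> c * X $ i $ k" if "X $ i $ k > 0" for i l k
  proof -
    have "\<bar>V $ i $ l\<bar> / X $ i $ k \<le> c"
      unfolding c_def by (rule Max_ge) (auto intro: rev_image_eqI[of "(i, l, k)"])
    with that show ?thesis by (simp add: divide_le_eq mult.commute)
  qed
  define S :: "real^'r^'r" where "S = (\<chi> k l. if k = l then d k else c)"
  define B where "B = V - X ** S"
  have "B $ i $ l \<le> 0 \<and> B $ i $ l * X $ i $ l = 0" for i l
  proof (cases "\<forall>k. X $ i $ k = 0")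
    case True
    then show ?thesis
      using zero_row[of i l] by (simp add: B_def matrix_matrix_mult_def)
  next
    case False
    then obtain k where k: "X $ i $ k > 0"
      using nn by (metis less_eq_real_def)
    have other: "X $ i $ k' = 0" if "k' \<noteq> k" for k'
      using nonneg_stiefel_row_support_unique[OF X k, of k'] nn[of i k'] that by fastforce
    have "(X ** S) $ i $ l = (\<Sum>k'\<in>UNIV. X $ i $ k' * S $ k' $ l)"
      by (simp add: matrix_matrix_mult_def)
    also have "\<dots> = (\<Sum>k'\<in>UNIV. if k' = k then X $ i $ k * S $ k $ l else 0)"
      by (rule sum.cong) (auto simp: other)
    finally have XS: "(X ** S) $ i $ l = X $ i $ k * S $ k $ l"
      by simp
    show ?thesis
    proof (cases "l = k")
      case True
      then show ?thesis using XS support[OF k] by (simp add: B_def S_def)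
    next
      case False
      then show ?thesis
        using XS c[OF k, of l] other[OF False] by (simp add: B_def S_def mult.commute abs_le_iff)
    qed
  qed
  then have "B \<in> normal_cone nonneg_cone X"
    by (intro normal_cone_nonneg_coneI) auto
  moreover have "X ** S \<in> stiefel_normal_space X"
    by (auto simp: stiefel_normal_space_def S_def transpose_def vec_eq_iff)
  moreover have "V = X ** S + B"
    by (simp add: B_def)
  ultimately show ?thesis
    by blast
qed

lemma polar_tangent_cone_nonneg_stiefel:
  fixes X V :: "real^'r^'n"
  assumes "X \<in> nonneg_stiefel"
  shows "V \<in> polar_cone (tangent_cone nonneg_stiefel X) \<longleftrightarrow>
    (\<exists>A\<in>stiefel_normal_space X. \<exists>B\<in>normal_cone nonneg_cone X. V = A + B)"
proof
  assume "V \<in> polar_cone (tangent_cone nonneg_stiefel X)"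
  then show "\<exists>A\<in>stiefel_normal_space X. \<exists>B\<in>normal_cone nonneg_cone X. V = A + B"
    by (intro stiefel_normal_space_plus_normal_cone_if[OF assms, where d = "\<lambda>j. inner (column j V) (column j X)"]
        polar_tangent_cone_nonneg_stiefel_zero_row[OF _ assms]
        polar_tangent_cone_nonneg_stiefel_support[OF _ assms])
qed (use stiefel_normal_space_plus_normal_cone_subset_polar[OF assms] in blast)

theorem lemma4p3:
  fixes f :: "real^'r^'n \<Rightarrow> real"
    and gradf :: "real^'r^'n \<Rightarrow> real^'r^'n"
    and U :: "(real^'r^'n) set"
    and X :: "real^'r^'n"
  assumes "CARD('r) \<le> CARD('n)"
    and "open U"
    and "stiefel \<subseteq> U"
    and "\<And>Y. Y \<in> U \<Longrightarrow> GDERIV f Y :> gradf Y"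
    and "continuous_on U gradf"
    and "X \<in> nonneg_stiefel"
  shows "(\<exists>A\<in>stiefel_normal_space X. \<exists>B\<in>normal_cone nonneg_cone X. gradf X + A + B = 0)
     \<longleftrightarrow> - gradf X \<in> polar_cone (tangent_cone nonneg_stiefel X)"
proof -
  \<comment> \<open>only \<open>X \<in> nonneg_stiefel\<close> matters\<close>
  have "gradf X + A + B = 0 \<longleftrightarrow> - gradf X = A + B" for A B
    by (simp only: add.assoc neg_eq_iff_add_eq_0)
  then show ?thesis
    using polar_tangent_cone_nonneg_stiefel[OF assms(6), of "- gradf X"] by simp
qed
end
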